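(* Let $m$ and $n$ be positive integers with $m$ odd. Then there exists a $\Delta$-permutation $\psi$ of the group $\mathbb{Z}_m\times\mathbb{Z}_{2n}$ such that (1) $\Delta=[(0,0)]\cup[\gamma \mid \gamma\in\mathbb{Z}_m\times\mathbb{Z}_{2n},\ \gamma\neq(0,n)]$ (that is, $\Delta$ contains $(0,0)$ twice and every other element of $\mathbb{Z}_m\times\mathbb{Z}_{2n}$ except $(0,n)$ exactly once), and (2) $\psi$ fixes $(0,0)$ and $\left(-\frac{m-1}{2},\ \left\lfloor\frac{n+1}{2}\right\rfloor+\frac{m-1}{2}n\right)$.
   Context: A list is a multiset; a $v$-list of a group is a multiset of $v$ (not necessarily distinct) elements of the group. Given a group $\Gamma$ (written additively) of order $v$ and a $v$-list $\Delta$ of $\Gamma$, a permutation $\varphi$ of $\Gamma$ is a $\Delta$-permutation if the multiset $[\varphi(a)-a \mid a\in\Gamma]$ equals $\Delta$. *)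

theory Defs
  imports Main "HOL-Library.Multiset"
begin

definition grp :: "int \<Rightarrow> int \<Rightarrow> (int \<times> int) set" where
  "grp m n = {0..<m} \<times> {0..<2*n}"

definition gsub :: "int \<Rightarrow> int \<Rightarrow> int \<times> int \<Rightarrow> int \<times> int \<Rightarrow> int \<times> int" where
  "gsub m n x y = ((fst x - fst y) mod m, (snd x - snd y) mod (2*n))"

definition is_delta_perm ::
  "int \<Rightarrow> int \<Rightarrow> (int \<times> int) multiset \<Rightarrow> (int \<times> int \<Rightarrow> int \<times> int) \<Rightarrow> bool" where
  "is_delta_perm m n \<Delta> \<phi> \<longleftrightarrow>
     bij_betw \<phi> (grp m n) (grp m n) \<and>
     image_mset (\<lambda>a. gsub m n (\<phi> a) a) (mset_set (grp m n)) = \<Delta>"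

end

theory Submission
  imports Defs
begin

(* Write k = (m - 1)/2 and h = k(k + 1), so that 2h = k (mod m). Let rho be a permutation
   of Z_2n fixing 0 and s whose differences are [0] + (Z_2n - {n}). Then
     psi (x, y) = (2x, rho y + n F(x))          for y <> s,
     psi (x, s) = (2x + k, s + n F(x + h))
   is a permutation of Z_m x Z_2n fixing (0, 0) and (-k, s), provided F : Z_m -> {0, 1}
   satisfies F(0) = F(-h) = 0 and F(x - h) <> F(x) for x <> 0. Indeed the rows y <> s
   contribute the differences (x, e + n F(x)) with e ranging over Z_2n - {n}, which miss
   exactly (x, n + n F(x)), while the row s contributes one difference (x, n F(x - h)) for each
   first coordinate x: for x <> 0 it fills that gap, and for x = 0 it repeats (0, 0).
   The permutations rho of Z_2n are pairs of reflections, moved to the required second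
   fixed point by conjugation with y |-> +-y + t. For n = 1 the group itself is cyclic,
   Z_m x Z_2 ~= Z_2m, and such a rho is transported directly. *)

lemma eq_if_mod_eq_abs_diff_less:
  fixes a b N :: int
  assumes "a mod N = b mod N" and "\<bar>a - b\<bar> < N"
  shows "a = b"
proof -
  obtain q where q: "a - b = N * q"
    using assms(1) by (auto simp: mod_eq_dvd_iff dvd_def)
  have "N > 0" using assms(2) by linarith
  with q assms(2) have "\<bar>q\<bar> < 1"
    by (auto simp: abs_mult mult_less_cancel_left_pos)
  with q show ?thesis by simp
qed

lemma mod_double_cancel_odd:
  fixes m a b :: int
  assumes "odd m" and "(2 * a) mod m = (2 * b) mod m"
  shows "a mod m = b mod m"
proof -
  have "coprime m 2" using assms(1) by (simp add: coprime_commute)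
  moreover have "m dvd (a - b) * 2"
    using assms(2) mod_eq_dvd_iff[of "2 * a" m "2 * b"] by (simp add: algebra_simps)
  ultimately show ?thesis
    using coprime_dvd_mult_left_iff mod_eq_dvd_iff by blast
qed

lemma mod_add_right_cancel:
  fixes a b c N :: int
  assumes "(a + c) mod N = (b + c) mod N"
  shows "a mod N = b mod N"
  using assms by (simp add: mod_eq_dvd_iff)

lemma add_half_mod_eq_cases:
  fixes n e a b :: int
  assumes n: "n > 0" and e: "e \<in> {0..<2 * n}" "e \<noteq> n"
    and ab: "a = 0 \<or> a = 1" "b = 0 \<or> b = 1"
    and eq: "(e + n * a) mod (2 * n) = (n * b) mod (2 * n)"
  shows "e = 0 \<and> a = b"
proof (cases "a = b")
  case True
  then have "e mod (2 * n) = 0 mod (2 * n)"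
    using eq mod_add_right_cancel[of e "n * a" "2 * n" 0] by simp
  then show ?thesis using e True by simp
next
  case False
  then consider "a = 0" "b = 1" | "a = 1" "b = 0" using ab by auto
  then show ?thesis
  proof cases
    case 1
    then show ?thesis using eq n e by (simp add: mod_pos_pos_trivial)
  next
    case 2
    then have "(e + n) mod (2 * n) = 0" using eq by simp
    moreover have "(e + n) mod (2 * n) = (e - n) mod (2 * n)"
      using mod_add_self2[of "e - n" "2 * n"] by (simp add: algebra_simps)
    ultimately show ?thesis
      using n e by (cases "e < n") (simp_all add: mod_pos_pos_trivial)
  qed
qed

lemma image_mset_mset_set_remove:
  assumes "finite A" "a \<in> A" "b \<in> B" "card A = card B"
    and "inj_on f (A - {a})" "f ` (A - {a}) \<subseteq> B - {b}"
  shows "image_mset f (mset_set A) = add_mset (f a) (mset_set (B - {b}))"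
proof -
  have "finite B" using assms(1-4) card_gt_0_iff by fastforce
  have "card (f ` (A - {a})) = card (B - {b})"
    using assms by (simp add: card_image card_Diff_singleton)
  then have image: "f ` (A - {a}) = B - {b}"
    using \<open>finite B\<close> assms(6) by (simp add: card_subset_eq)
  have "mset_set A = add_mset a (mset_set (A - {a}))"
    using assms(1,2) by (rule mset_set.remove)
  then show ?thesis
    using image image_mset_mset_set[OF assms(5)] by simp
qed

lemma gsub_in_grp:
  assumes "m > 0" "n > 0"
  shows "gsub m n p q \<in> grp m n"
  using assms by (simp add: gsub_def grp_def)

lemma is_delta_permI:
  fixes \<psi> :: "int \<times> int \<Rightarrow> int \<times> int"
  assumes "m > 0" "n > 0"
    and maps: "\<And>p. p \<in> grp m n \<Longrightarrow> \<psi> p \<in> grp m n"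
    and inj: "inj_on \<psi> (grp m n)"
    and fixes_0: "\<psi> (0, 0) = (0, 0)"
    and diff_inj: "inj_on (\<lambda>p. gsub m n (\<psi> p) p) (grp m n - {(0, 0)})"
    and diff_ne: "\<And>p. p \<in> grp m n - {(0, 0)} \<Longrightarrow> gsub m n (\<psi> p) p \<noteq> (0, n)"
  shows "is_delta_perm m n (add_mset (0, 0) (mset_set (grp m n - {(0, n)}))) \<psi>"
proof -
  have fin: "finite (grp m n)" by (simp add: grp_def)
  have "\<psi> ` grp m n = grp m n"
    using endo_inj_surj[OF fin _ inj] maps by blast
  then have "bij_betw \<psi> (grp m n) (grp m n)"
    using inj by (simp add: bij_betw_def)
  moreover have "image_mset (\<lambda>p. gsub m n (\<psi> p) p) (mset_set (grp m n))
      = add_mset (0, 0) (mset_set (grp m n - {(0, n)}))"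
  proof -
    have "(0, 0) \<in> grp m n" "(0, n) \<in> grp m n" using assms(1,2) by (auto simp: grp_def)
    moreover have "(\<lambda>p. gsub m n (\<psi> p) p) ` (grp m n - {(0, 0)}) \<subseteq> grp m n - {(0, n)}"
      using diff_ne gsub_in_grp[OF assms(1,2)] by (intro image_subsetI) auto
    moreover have "gsub m n (\<psi> (0, 0)) (0, 0) = (0, 0)" using fixes_0 by (simp add: gsub_def)
    ultimately show ?thesis
      using image_mset_mset_set_remove[OF fin _ _ refl diff_inj, of "(0, n)"] by simp
  qed
  ultimately show ?thesis by (simp add: is_delta_perm_def)
qed

(* The theorem for m = 1, with two fixed points a and b: since both contribute the difference
   0, the difference multiset [0] + (Z_2n - {n}) amounts to distinct differences off b that
   avoid n. *)
locale cyclic_delta_perm =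
  fixes n a b :: int and \<rho> :: "int \<Rightarrow> int"
  assumes a_in: "a \<in> {0..<2 * n}" and b_in: "b \<in> {0..<2 * n}" and a_ne_b: "a \<noteq> b"
    and maps: "\<And>y. y \<in> {0..<2 * n} \<Longrightarrow> \<rho> y \<in> {0..<2 * n}"
    and inj: "inj_on \<rho> {0..<2 * n}"
    and fixes_a: "\<rho> a = a" and fixes_b: "\<rho> b = b"
    and diff_inj: "inj_on (\<lambda>y. (\<rho> y - y) mod (2 * n)) ({0..<2 * n} - {b})"
    and diff_ne: "\<And>y. y \<in> {0..<2 * n} \<Longrightarrow> (\<rho> y - y) mod (2 * n) \<noteq> n"
begin

lemma n_pos: "n > 0"
  using a_in by simp

lemma swap: "cyclic_delta_perm n b a \<rho>"
proof
  let ?d = "\<lambda>y. (\<rho> y - y) mod (2 * n)"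
  have d_0: "?d a = 0" "?d b = 0" by (simp_all add: fixes_a fixes_b)
  have not_zero: "?d y \<noteq> 0" if "y \<in> {0..<2 * n}" "y \<noteq> a" "y \<noteq> b" for y
  proof
    assume "?d y = 0"
    then have "?d y = ?d a" using d_0 by simp
    then show False using inj_onD[OF diff_inj] that a_in a_ne_b by blast
  qed
  show "inj_on ?d ({0..<2 * n} - {a})"
  proof (rule inj_onI)
    fix y1 y2 assume y: "y1 \<in> {0..<2 * n} - {a}" "y2 \<in> {0..<2 * n} - {a}" "?d y1 = ?d y2"
    show "y1 = y2"
    proof (cases "y1 = b \<or> y2 = b")
      case True
      then show ?thesis using y not_zero d_0 by (metis DiffE singletonI)
    next
      case False
      then show ?thesis using y diff_inj by (auto dest: inj_onD)
    qed
  qed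
qed (use b_in a_in a_ne_b maps inj fixes_b fixes_a diff_ne in \<open>simp_all\<close>)

lemma conj_affine:
  fixes u t :: int
  assumes u: "u = 1 \<or> u = -1"
  shows "cyclic_delta_perm n ((u * a + t) mod (2 * n)) ((u * b + t) mod (2 * n))
           (\<lambda>y. (u * \<rho> ((u * (y - t)) mod (2 * n)) + t) mod (2 * n))"
proof -
  define N where "N = 2 * n"
  define \<alpha> where "\<alpha> y = (u * y + t) mod N" for y
  define \<beta> where "\<beta> y = (u * (y - t)) mod N" for y
  have N: "N > 0" using n_pos by (simp add: N_def)
  have uu: "u * u = 1" using u by auto
  have unit_cancel: "x mod N = z mod N" if "(u * x) mod N = (u * z) mod N" for x z
    using arg_cong[OF that, of "\<lambda>w. (u * w) mod N"]
    by (simp add: mod_mult_right_eq mult.assoc[symmetric] uu)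
  have \<alpha>_diff: "(\<alpha> x - \<alpha> z) mod N = (u * (x - z)) mod N" for x z
    unfolding \<alpha>_def mod_diff_eq by (simp add: right_diff_distrib)
  have \<beta>_\<alpha>: "\<beta> (\<alpha> y) = y" if "y \<in> {0..<N}" for y
  proof -
    have "\<beta> (\<alpha> y) = (u * ((u * y + t) mod N - t)) mod N" by (simp add: \<alpha>_def \<beta>_def)
    also have "\<dots> = (u * (u * y + t - t)) mod N" by (metis mod_diff_left_eq mod_mult_right_eq)
    also have "\<dots> = y" using that uu by (simp add: mult.assoc[symmetric])
    finally show ?thesis .
  qed
  have \<alpha>_\<beta>: "\<alpha> (\<beta> y) = y" if "y \<in> {0..<N}" for y
  proof -
    have "\<alpha> (\<beta> y) = (u * ((u * (y - t)) mod N) + t) mod N" by (simp add: \<alpha>_def \<beta>_def)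
    also have "\<dots> = (u * (u * (y - t)) + t) mod N" by (metis mod_add_left_eq mod_mult_right_eq)
    also have "\<dots> = y" using that uu by (simp add: mult.assoc[symmetric])
    finally show ?thesis .
  qed
  have \<beta>_in: "\<beta> y \<in> {0..<N}" for y using N by (simp add: \<beta>_def)
  have \<rho>_in: "\<rho> (\<beta> y) \<in> {0..<N}" for y using maps \<beta>_in by (simp add: N_def)
  have diff: "(\<alpha> (\<rho> (\<beta> y)) - y) mod N = (u * ((\<rho> (\<beta> y) - \<beta> y) mod N)) mod N"
    if "y \<in> {0..<N}" for y
    using \<alpha>_diff[of "\<rho> (\<beta> y)" "\<beta> y"] \<alpha>_\<beta>[OF that] by (simp add: mod_mult_right_eq)
  have "cyclic_delta_perm n (\<alpha> a) (\<alpha> b) (\<lambda>y. \<alpha> (\<rho> (\<beta> y)))"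
  proof (unfold_locales, fold N_def)
    show "\<alpha> a \<in> {0..<N}" "\<alpha> b \<in> {0..<N}" "\<And>y. \<alpha> (\<rho> (\<beta> y)) \<in> {0..<N}"
      using N by (simp_all add: \<alpha>_def)
    show "\<alpha> a \<noteq> \<alpha> b" using \<beta>_\<alpha> a_in b_in a_ne_b N_def by metis
    show "\<alpha> (\<rho> (\<beta> (\<alpha> a))) = \<alpha> a" "\<alpha> (\<rho> (\<beta> (\<alpha> b))) = \<alpha> b"
      using \<beta>_\<alpha> a_in b_in fixes_a fixes_b N_def by simp_all
    show "inj_on (\<lambda>y. \<alpha> (\<rho> (\<beta> y))) {0..<N}"
    proof (rule inj_onI)
      fix y1 y2 assume y: "y1 \<in> {0..<N}" "y2 \<in> {0..<N}" "\<alpha> (\<rho> (\<beta> y1)) = \<alpha> (\<rho> (\<beta> y2))"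
      then have "\<rho> (\<beta> y1) = \<rho> (\<beta> y2)" using \<beta>_\<alpha> \<rho>_in by metis
      then have "\<beta> y1 = \<beta> y2" using inj \<beta>_in N_def by (auto dest: inj_onD)
      then show "y1 = y2" using \<alpha>_\<beta> y by metis
    qed
    show "inj_on (\<lambda>y. (\<alpha> (\<rho> (\<beta> y)) - y) mod N) ({0..<N} - {\<alpha> b})"
    proof (rule inj_onI)
      fix y1 y2 assume y: "y1 \<in> {0..<N} - {\<alpha> b}" "y2 \<in> {0..<N} - {\<alpha> b}"
        and eq: "(\<alpha> (\<rho> (\<beta> y1)) - y1) mod N = (\<alpha> (\<rho> (\<beta> y2)) - y2) mod N"
      have "\<beta> y1 \<noteq> b" "\<beta> y2 \<noteq> b" using y \<alpha>_\<beta> by force+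
      moreover have "(\<rho> (\<beta> y1) - \<beta> y1) mod N = (\<rho> (\<beta> y2) - \<beta> y2) mod N"
        using unit_cancel[of "(\<rho> (\<beta> y1) - \<beta> y1) mod N" "(\<rho> (\<beta> y2) - \<beta> y2) mod N"] eq y diff
        by simp
      ultimately have "\<beta> y1 = \<beta> y2" using diff_inj \<beta>_in N_def by (auto dest: inj_onD)
      then show "y1 = y2" using \<alpha>_\<beta> y by (metis DiffD1)
    qed
    show "(\<alpha> (\<rho> (\<beta> y)) - y) mod N \<noteq> n" if "y \<in> {0..<N}" for y
    proof
      assume "(\<alpha> (\<rho> (\<beta> y)) - y) mod N = n"
      moreover have "(u * n) mod N = n" using u n_pos by (auto simp: N_def zmod_zminus1_eq_if)
      ultimately have "(\<rho> (\<beta> y) - \<beta> y) mod N = n mod N"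
        using unit_cancel[of "(\<rho> (\<beta> y) - \<beta> y) mod N" n] diff[OF that] by simp
      then show False using diff_ne[of "\<beta> y"] \<beta>_in n_pos by (simp add: N_def)
    qed
  qed
  then show ?thesis by (simp add: \<alpha>_def \<beta>_def N_def)
qed

end

lemma cyclic_delta_permI_small_diff:
  fixes n a b :: int and \<rho> :: "int \<Rightarrow> int"
  assumes "a \<in> {0..<2 * n}" "b \<in> {0..<2 * n}" "a \<noteq> b"
    and "\<And>y. y \<in> {0..<2 * n} \<Longrightarrow> \<rho> y \<in> {0..<2 * n}"
    and "inj_on \<rho> {0..<2 * n}" "\<rho> a = a" "\<rho> b = b"
    and small: "\<And>y. y \<in> {0..<2 * n} \<Longrightarrow> \<bar>\<rho> y - y\<bar> < n"
    and diff_inj: "\<And>y1 y2. y1 \<in> {0..<2 * n} - {b} \<Longrightarrow> y2 \<in> {0..<2 * n} - {b} \<Longrightarrow>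
      \<rho> y1 - y1 = \<rho> y2 - y2 \<Longrightarrow> y1 = y2"
  shows "cyclic_delta_perm n a b \<rho>"
proof
  show "inj_on (\<lambda>y. (\<rho> y - y) mod (2 * n)) ({0..<2 * n} - {b})"
  proof (rule inj_onI)
    fix y1 y2 assume y: "y1 \<in> {0..<2 * n} - {b}" "y2 \<in> {0..<2 * n} - {b}"
      and eq: "(\<rho> y1 - y1) mod (2 * n) = (\<rho> y2 - y2) mod (2 * n)"
    have "\<bar>(\<rho> y1 - y1) - (\<rho> y2 - y2)\<bar> < 2 * n"
      using small[of y1] small[of y2] y by fastforce
    then have "\<rho> y1 - y1 = \<rho> y2 - y2"
      using eq by (rule eq_if_mod_eq_abs_diff_less[rotated])
    then show "y1 = y2" using diff_inj y by blast
  qed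
  show "(\<rho> y - y) mod (2 * n) \<noteq> n" if y: "y \<in> {0..<2 * n}" for y
  proof
    assume "(\<rho> y - y) mod (2 * n) = n"
    moreover have "n mod (2 * n) = n" using y by simp
    moreover have "\<bar>(\<rho> y - y) - n\<bar> < 2 * n" using small[OF y] by linarith
    ultimately have "\<rho> y - y = n" by (metis eq_if_mod_eq_abs_diff_less)
    then show False using small[OF y] by simp
  qed
qed (use assms(1-7) in auto)

(* The differences 2c - 2y for 0 < y < 2c and 2c - 1 + 2n - 2y for 2c <= y < 2n are the even
   and the odd integers in (-n, n). *)
definition reflect_perm :: "int \<Rightarrow> int \<Rightarrow> int \<Rightarrow> int" where
  "reflect_perm n c y = (if y = 0 then 0 else if y < 2 * c then 2 * c - y else 2 * c - 1 + 2 * n - y)"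

lemma cyclic_delta_perm_reflect:
  fixes n c :: int
  assumes "n \<ge> 1" "n \<le> 2 * c" "2 * c \<le> n + 1"
  shows "cyclic_delta_perm n 0 c (reflect_perm n c)"
proof (rule cyclic_delta_permI_small_diff)
  show "inj_on (reflect_perm n c) {0..<2 * n}"
    using assms by (auto simp: inj_on_def reflect_perm_def split: if_splits)
  show "\<And>y1 y2. y1 \<in> {0..<2 * n} - {c} \<Longrightarrow> y2 \<in> {0..<2 * n} - {c} \<Longrightarrow>
      reflect_perm n c y1 - y1 = reflect_perm n c y2 - y2 \<Longrightarrow> y1 = y2"
    using assms unfolding reflect_perm_def by (auto split: if_splits; presburger)
qed (use assms in \<open>auto simp: reflect_perm_def\<close>)

(* For n = 2t + 1, a variant of reflect_perm whose second fixed point is t instead of t + 1. *)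
definition zigzag_perm :: "int \<Rightarrow> int \<Rightarrow> int" where
  "zigzag_perm t y = (if y = 0 then 0 else if y \<le> 2 * t - 1 then 2 * t - y
     else if y = 2 * t + 1 then 4 * t + 1 else if y = 4 * t then 2 * t
     else if even y then 6 * t - 1 - y else 6 * t + 3 - y)"

lemma cyclic_delta_perm_zigzag:
  fixes t :: int
  assumes "t \<ge> 1"
  shows "cyclic_delta_perm (2 * t + 1) 0 t (zigzag_perm t)"
proof (rule cyclic_delta_permI_small_diff)
  show "\<And>y. y \<in> {0..<2 * (2 * t + 1)} \<Longrightarrow> zigzag_perm t y \<in> {0..<2 * (2 * t + 1)}"
    using assms unfolding zigzag_perm_def by (auto split: if_splits; presburger)
  show "inj_on (zigzag_perm t) {0..<2 * (2 * t + 1)}"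
    using assms unfolding inj_on_def zigzag_perm_def by (auto split: if_splits; presburger)
  have "1 - (2 * t + 1) \<le> zigzag_perm t y - y \<and> zigzag_perm t y - y \<le> (2 * t + 1) - 1"
    if "y \<in> {0..<2 * (2 * t + 1)}" for y
    using assms that unfolding zigzag_perm_def by (auto split: if_splits; presburger)
  then show "\<And>y. y \<in> {0..<2 * (2 * t + 1)} \<Longrightarrow> \<bar>zigzag_perm t y - y\<bar> < 2 * t + 1"
    by fastforce
  show "\<And>y1 y2. y1 \<in> {0..<2 * (2 * t + 1)} - {t} \<Longrightarrow> y2 \<in> {0..<2 * (2 * t + 1)} - {t} \<Longrightarrow>
      zigzag_perm t y1 - y1 = zigzag_perm t y2 - y2 \<Longrightarrow> y1 = y2"
    using assms unfolding zigzag_perm_def by (auto split: if_splits; presburger)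
qed (use assms in \<open>auto simp: zigzag_perm_def\<close>)

lemma cyclic_delta_perm_exists_antipode:
  fixes n :: int
  assumes "n \<ge> 2"
  shows "\<exists>\<rho>. cyclic_delta_perm n 0 ((n + 1) div 2 + n) \<rho>"
proof (cases "even n")
  case True
  define c where "c = (n + 1) div 2"
  interpret cyclic_delta_perm n 0 c "reflect_perm n c"
    using True assms by (intro cyclic_delta_perm_reflect) (auto simp: c_def)
  have "(- c) mod (2 * n) = c + n"
    using True assms by (auto simp: c_def zmod_zminus1_eq_if elim!: evenE)
  then show ?thesis using conj_affine[of "-1" 0] unfolding c_def by auto
next
  case False
  then obtain t where n: "n = 2 * t + 1" by (rule oddE)
  then interpret cyclic_delta_perm n 0 t "zigzag_perm t"
    using assms cyclic_delta_perm_zigzag[of t] by simp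
  interpret shifted: cyclic_delta_perm n "(- t) mod (2 * n)" 0
    "\<lambda>y. (zigzag_perm t ((y + t) mod (2 * n)) - t) mod (2 * n)"
    using conj_affine[of 1 "- t"] by simp
  have "(- t) mod (2 * n) = (n + 1) div 2 + n" using n assms by (simp add: zmod_zminus1_eq_if)
  then show ?thesis using shifted.swap by auto
qed

lemma cyclic_delta_perm_exists:
  fixes n j :: int
  assumes "n \<ge> 2"
  shows "\<exists>\<rho>. cyclic_delta_perm n 0 (((n + 1) div 2 + j * n) mod (2 * n)) \<rho>"
proof -
  define c where "c = (n + 1) div 2"
  have c: "n \<le> 2 * c" "2 * c \<le> n + 1" by (simp_all add: c_def)
  show ?thesis
  proof (cases "even j")
    case True
    then obtain i where "j = 2 * i" by (rule evenE)
    then have "c + j * n = c + i * (2 * n)" by simp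
    then have "(c + j * n) mod (2 * n) = c mod (2 * n)" by (simp only: mod_mult_self1)
    also have "\<dots> = c" using c assms by (simp add: mod_pos_pos_trivial)
    finally have "(c + j * n) mod (2 * n) = c" .
    then show ?thesis
      using cyclic_delta_perm_reflect[of n c] c assms unfolding c_def by auto
  next
    case False
    then obtain i where "j = 2 * i + 1" by (rule oddE)
    then have "c + j * n = (c + n) + i * (2 * n)" by (simp add: algebra_simps)
    then have "(c + j * n) mod (2 * n) = (c + n) mod (2 * n)" by (simp only: mod_mult_self1)
    also have "\<dots> = c + n" using c assms by (simp add: mod_pos_pos_trivial)
    finally have "(c + j * n) mod (2 * n) = c + n" .
    then show ?thesis using cyclic_delta_perm_exists_antipode[OF assms] unfolding c_def by auto
  qed
qed

(* For odd m, to_prod is the Chinese remainder isomorphism Z_2m ~= Z_m x Z_2 and from_prod its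
   inverse. *)
definition to_prod :: "int \<Rightarrow> int \<Rightarrow> int \<times> int" where
  "to_prod m z = (z mod m, z mod 2)"

definition from_prod :: "int \<Rightarrow> int \<times> int \<Rightarrow> int" where
  "from_prod m p = fst p + m * ((fst p + snd p) mod 2)"

lemma to_prod_from_prod:
  assumes "odd m" "p \<in> grp m 1"
  shows "to_prod m (from_prod m p) = p"
proof -
  obtain x y where p: "p = (x, y)" "x \<in> {0..<m}" "y \<in> {0..<2}"
    using assms(2) by (auto simp: grp_def)
  obtain j where m: "m = 2 * j + 1" using assms(1) by (rule oddE)
  have "(x + y) mod 2 = 0 \<or> (x + y) mod 2 = 1" by presburger
  then have "(x + m * ((x + y) mod 2)) mod 2 = y" using p(3) m by (elim disjE) (simp; presburger)+
  then show ?thesis using p by (simp add: to_prod_def from_prod_def)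
qed

lemma from_prod_to_prod:
  assumes "odd m" "z \<in> {0..<2 * m}"
  shows "from_prod m (to_prod m z) = z"
proof -
  have m: "m > 0" using assms by auto
  define q where "q = z div m"
  have z: "z = m * q + z mod m" by (simp add: q_def)
  have "q \<ge> 0" using assms m by (simp add: q_def pos_imp_zdiv_nonneg_iff)
  moreover have "z < 2 * m" using assms(2) by simp
  then have "m * q < m * 2"
    using z pos_mod_sign[OF m, of z] by linarith
  ultimately have "q = 0 \<or> q = 1" using m by (simp add: mult_less_cancel_left_pos) arith
  moreover obtain j where "m = 2 * j + 1" using assms(1) by (rule oddE)
  ultimately have "q = (r + z mod 2) mod 2" if "z = m * q + r" for r
    using that by (elim disjE) (simp; presburger)+
  then have "q = (z mod m + z mod 2) mod 2" using z by blast
  then show ?thesis using z by (simp add: to_prod_def from_prod_def)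
qed

lemma from_prod_in:
  assumes "m > 0" "p \<in> grp m 1"
  shows "from_prod m p \<in> {0..<2 * m}"
proof -
  obtain x y where p: "p = (x, y)" "x \<in> {0..<m}"
    using assms(2) by (auto simp: grp_def)
  have "(x + y) mod 2 = 0 \<or> (x + y) mod 2 = 1" by presburger
  then show ?thesis using p assms(1) by (auto simp: from_prod_def)
qed

lemma to_prod_in:
  assumes "m > 0"
  shows "to_prod m z \<in> grp m 1"
  using assms by (simp add: to_prod_def grp_def)

lemma gsub_to_prod: "gsub m 1 (to_prod m x) (to_prod m z) = to_prod m (x - z)"
  by (simp add: gsub_def to_prod_def mod_diff_eq)

lemma to_prod_mod_double: "to_prod m (z mod (2 * m)) = to_prod m z"
  by (simp add: to_prod_def mod_mod_cancel)

lemma is_delta_perm_from_cyclic: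
  fixes m c :: int and \<rho> :: "int \<Rightarrow> int"
  assumes "odd m" and cyc: "cyclic_delta_perm m 0 c \<rho>"
  defines "\<psi> \<equiv> \<lambda>p. to_prod m (\<rho> (from_prod m p))"
  shows "is_delta_perm m 1 (add_mset (0, 0) (mset_set (grp m 1 - {(0, 1)}))) \<psi>"
    and "\<psi> (0, 0) = (0, 0)"
    and "\<psi> (to_prod m c) = to_prod m c"
proof -
  interpret cyclic_delta_perm m 0 c \<rho> by (fact cyc)
  interpret swapped: cyclic_delta_perm m c 0 \<rho> by (fact swap)
  have m: "m > 0" by (fact n_pos)
  have to_prod_inj: "inj_on (to_prod m) {0..<2 * m}"
    using from_prod_to_prod[OF assms(1)] by (rule inj_on_inverseI)
  have diff: "gsub m 1 (\<psi> p) p = to_prod m ((\<rho> z - z) mod (2 * m))"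
    if "p \<in> grp m 1" "z = from_prod m p" for p z
    using that to_prod_from_prod[OF assms(1)]
    by (metis \<psi>_def gsub_to_prod to_prod_mod_double)
  have z_in: "from_prod m p \<in> {0..<2 * m}" if "p \<in> grp m 1" for p
    using from_prod_in[OF m that] .
  have z_ne: "from_prod m p \<noteq> 0" if "p \<in> grp m 1 - {(0, 0)}" for p
  proof
    assume "from_prod m p = 0"
    then have "p = to_prod m 0" using that to_prod_from_prod[OF assms(1)] by (metis DiffD1)
    then show False using that by (simp add: to_prod_def)
  qed
  show "\<psi> (0, 0) = (0, 0)"
    using fixes_a by (simp add: \<psi>_def from_prod_def to_prod_def)
  show "\<psi> (to_prod m c) = to_prod m c"
    using fixes_b b_in by (simp add: \<psi>_def from_prod_to_prod[OF assms(1)])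
  show "is_delta_perm m 1 (add_mset (0, 0) (mset_set (grp m 1 - {(0, 1)}))) \<psi>"
  proof (rule is_delta_permI)
    show "\<psi> p \<in> grp m 1" for p using to_prod_in[OF m] by (simp add: \<psi>_def)
    show "inj_on \<psi> (grp m 1)"
    proof (rule inj_onI)
      fix p1 p2 assume p: "p1 \<in> grp m 1" "p2 \<in> grp m 1" "\<psi> p1 = \<psi> p2"
      then have "\<rho> (from_prod m p1) = \<rho> (from_prod m p2)"
        using inj_onD[OF to_prod_inj] maps z_in by (simp add: \<psi>_def)
      then have "from_prod m p1 = from_prod m p2"
        using inj_onD[OF inj] z_in p by blast
      then show "p1 = p2" using p to_prod_from_prod[OF assms(1)] by metis
    qed
    show "inj_on (\<lambda>p. gsub m 1 (\<psi> p) p) (grp m 1 - {(0, 0)})"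
    proof (rule inj_onI)
      fix p1 p2 assume p: "p1 \<in> grp m 1 - {(0, 0)}" "p2 \<in> grp m 1 - {(0, 0)}"
        and eq: "gsub m 1 (\<psi> p1) p1 = gsub m 1 (\<psi> p2) p2"
      define z1 z2 where "z1 = from_prod m p1" and "z2 = from_prod m p2"
      have z: "z1 \<in> {0..<2 * m} - {0}" "z2 \<in> {0..<2 * m} - {0}"
        using p z_in z_ne by (simp_all add: z1_def z2_def)
      have "(\<rho> z1 - z1) mod (2 * m) = (\<rho> z2 - z2) mod (2 * m)"
        using eq diff p inj_onD[OF to_prod_inj] m by (simp add: z1_def z2_def)
      then have "z1 = z2" using inj_onD[OF swapped.diff_inj] z by blast
      then show "p1 = p2" using p to_prod_from_prod[OF assms(1)] by (metis DiffD1 z1_def z2_def)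
    qed
    show "gsub m 1 (\<psi> p) p \<noteq> (0, 1)" if "p \<in> grp m 1 - {(0, 0)}" for p
    proof
      assume "gsub m 1 (\<psi> p) p = (0, 1)"
      moreover have "(0, 1) = to_prod m m" using assms(1) by (simp add: to_prod_def odd_iff_mod_2_eq_one)
      ultimately have "(\<rho> (from_prod m p) - from_prod m p) mod (2 * m) = m"
        using diff[of p] that inj_onD[OF to_prod_inj] m by simp
      then show False using diff_ne z_in that by blast
    qed
  qed (use m fixes_a in \<open>simp_all add: \<psi>_def from_prod_def to_prod_def\<close>)
qed

locale delta_lift = cyclic_delta_perm n 0 s \<rho> for n s :: int and \<rho> :: "int \<Rightarrow> int" +
  fixes m k :: int
  assumes m_eq: "m = 2 * k + 1" and k_nonneg: "k \<ge> 0"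
begin

definition h :: int where "h = k * (k + 1)"

(* Since 4h = -1 (mod m), replacing z by z - h lowers the residue of -4z by one, so its parity
   flips except where the residue wraps around, at z = 0 (mod m). *)
definition label :: "int \<Rightarrow> int" where "label z = ((- 4 * z) mod m) mod 2"

definition lift :: "int \<times> int \<Rightarrow> int \<times> int" where
  "lift = (\<lambda>(x, y). if y = s then ((2 * x + k) mod m, (s + n * label (x + h)) mod (2 * n))
                    else ((2 * x) mod m, (\<rho> y + n * label x) mod (2 * n)))"

lemma m_pos: "m > 0"
  using m_eq k_nonneg by simp

lemma m_odd: "odd m"
  using m_eq by simp

lemma double_h: "2 * h = k + m * k"
  by (simp add: h_def m_eq algebra_simps)

lemma label_01: "label z = 0 \<or> label z = 1"
  unfolding label_def by presburger

lemma label_cong: "x mod m = z mod m \<Longrightarrow> label x = label z"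
  unfolding label_def by (metis mod_mult_right_eq)

lemma label_shift:
  assumes "x mod m \<noteq> 0"
  shows "label (x - h) \<noteq> label x"
proof -
  define J where "J = (- 4 * x) mod m"
  have "J \<noteq> 0"
  proof
    assume "J = 0"
    then have "(2 * (2 * x)) mod m = (2 * (2 * 0)) mod m"
      by (simp add: J_def mod_eq_0_iff_dvd)
    then have "(2 * x) mod m = (2 * 0) mod m" by (rule mod_double_cancel_odd[OF m_odd])
    then have "x mod m = 0 mod m" by (rule mod_double_cancel_odd[OF m_odd])
    then show False using assms by simp
  qed
  moreover have "J \<ge> 0" "J < m" using m_pos by (simp_all add: J_def)
  ultimately have J: "J - 1 \<in> {0..<m}" by simp
  have "- 4 * (x - h) = (- 4 * x - 1) + m * (1 + 2 * k)"
    using double_h m_eq by (simp add: algebra_simps)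
  then have "(- 4 * (x - h)) mod m = (- 4 * x - 1) mod m"
    by (simp only: mod_mult_self2)
  also have "\<dots> = (J - 1) mod m"
    unfolding J_def mod_diff_left_eq ..
  also have "\<dots> = J - 1" using J by simp
  finally have "label (x - h) = (J - 1) mod 2" by (simp add: label_def)
  moreover have "label x = J mod 2" by (simp add: label_def J_def)
  ultimately show ?thesis by presburger
qed

lemma label_minus_h: "label (- h) = 0"
proof -
  have "- 4 * (- h) = (m - 1) + m * (2 * k)" using double_h m_eq by (simp add: algebra_simps)
  then have "(- 4 * (- h)) mod m = (m - 1) mod m" by (simp only: mod_mult_self2)
  also have "\<dots> = m - 1" using m_pos by (intro mod_pos_pos_trivial) auto
  finally have "(- 4 * (- h)) mod m = m - 1" .
  then show ?thesis using m_odd by (simp add: label_def)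
qed

lemma k_cong_double_h: "(z + k) mod m = (z + 2 * h) mod m"
proof -
  have "z + 2 * h = (z + k) + m * k" using double_h by simp
  then show ?thesis by (simp only: mod_mult_self2)
qed

lemma lift_off: "y \<noteq> s \<Longrightarrow> lift (x, y) = ((2 * x) mod m, (\<rho> y + n * label x) mod (2 * n))"
  by (simp add: lift_def)

lemma lift_on: "lift (x, s) = ((2 * x + k) mod m, (s + n * label (x + h)) mod (2 * n))"
  by (simp add: lift_def)

lemma lift_in_grp: "lift p \<in> grp m n"
  using m_pos n_pos by (auto simp: lift_def grp_def split: prod.splits)

lemma double_mod_inj:
  assumes "x1 \<in> {0..<m}" "x2 \<in> {0..<m}" "(2 * x1) mod m = (2 * x2) mod m"
  shows "x1 = x2"
  using mod_double_cancel_odd[OF m_odd assms(3)] assms(1,2) by simp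

lemma lift_rows_disjoint:
  assumes "y1 \<in> {0..<2 * n}" "y1 \<noteq> s"
  shows "lift (x1, y1) \<noteq> lift (x2, s)"
proof
  assume "lift (x1, y1) = lift (x2, s)"
  then have first: "(2 * x1) mod m = (2 * x2 + k) mod m"
    and second: "(\<rho> y1 + n * label x1) mod (2 * n) = (s + n * label (x2 + h)) mod (2 * n)"
    using assms by (simp_all add: lift_off lift_on)
  have "(2 * x1) mod m = (2 * (x2 + h)) mod m"
    using first k_cong_double_h[of "2 * x2"] by (simp add: algebra_simps)
  then have "label x1 = label (x2 + h)"
    by (rule label_cong[OF mod_double_cancel_odd[OF m_odd]])
  then have "\<rho> y1 mod (2 * n) = s mod (2 * n)"
    using second mod_add_right_cancel by metis
  then have "\<rho> y1 = \<rho> s" using maps assms(1) b_in fixes_b by simp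
  then show False using inj_onD[OF inj] assms b_in by blast
qed

lemma inj_lift: "inj_on lift (grp m n)"
proof (rule inj_onI)
  fix p1 p2 assume p: "p1 \<in> grp m n" "p2 \<in> grp m n" and eq: "lift p1 = lift p2"
  obtain x1 y1 x2 y2 where p12: "p1 = (x1, y1)" "p2 = (x2, y2)" by fastforce
  have r: "x1 \<in> {0..<m}" "y1 \<in> {0..<2 * n}" "x2 \<in> {0..<m}" "y2 \<in> {0..<2 * n}"
    using p p12 by (auto simp: grp_def)
  consider "y1 = s" "y2 = s" | "y1 \<noteq> s" "y2 \<noteq> s" | "(y1 = s) \<noteq> (y2 = s)" by blast
  then show "p1 = p2"
  proof cases
    case 1
    then have "(2 * x1 + k) mod m = (2 * x2 + k) mod m" using eq p12 by (simp add: lift_on)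
    then have "x1 = x2" using r double_mod_inj mod_add_right_cancel by metis
    then show ?thesis using 1 p12 by simp
  next
    case 2
    then have "(2 * x1) mod m = (2 * x2) mod m"
      and snd: "(\<rho> y1 + n * label x1) mod (2 * n) = (\<rho> y2 + n * label x2) mod (2 * n)"
      using eq p12 by (simp_all add: lift_off)
    then have "x1 = x2" using r double_mod_inj by blast
    then have "\<rho> y1 mod (2 * n) = \<rho> y2 mod (2 * n)" using snd mod_add_right_cancel by metis
    then have "y1 = y2" using maps r inj_onD[OF inj] by simp
    then show ?thesis using \<open>x1 = x2\<close> p12 by simp
  next
    case 3
    then show ?thesis using lift_rows_disjoint r eq p12 by metis
  qed
qed

lemma gsub_lift_off:
  assumes "x \<in> {0..<m}" "y \<noteq> s"
  shows "gsub m n (lift (x, y)) (x, y) = (x, (\<rho> y - y + n * label x) mod (2 * n))"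
proof -
  have "((2 * x) mod m - x) mod m = x" using assms(1) by (simp add: mod_diff_left_eq)
  moreover have "((\<rho> y + n * label x) mod (2 * n) - y) mod (2 * n)
      = (\<rho> y - y + n * label x) mod (2 * n)"
    by (simp add: mod_diff_left_eq algebra_simps)
  ultimately show ?thesis using assms(2) by (simp add: gsub_def lift_off)
qed

lemma gsub_lift_on:
  "gsub m n (lift (x, s)) (x, s) = ((x + k) mod m, (n * label (x + h)) mod (2 * n))"
proof -
  have "((2 * x + k) mod m - x) mod m = (x + k) mod m"
    by (simp add: mod_diff_left_eq algebra_simps)
  moreover have "((s + n * label (x + h)) mod (2 * n) - s) mod (2 * n)
      = (n * label (x + h)) mod (2 * n)"
    by (simp add: mod_diff_left_eq)
  ultimately show ?thesis by (simp add: gsub_def lift_on)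
qed

lemma lift_diff_rows_disjoint:
  assumes "x1 \<in> {0..<m}" "y1 \<in> {0..<2 * n}" "y1 \<noteq> s" "(x1, y1) \<noteq> (0, 0)"
  shows "gsub m n (lift (x1, y1)) (x1, y1) \<noteq> gsub m n (lift (x2, s)) (x2, s)"
proof
  assume "gsub m n (lift (x1, y1)) (x1, y1) = gsub m n (lift (x2, s)) (x2, s)"
  then have "x1 = (x2 + k) mod m \<and>
      (\<rho> y1 - y1 + n * label x1) mod (2 * n) = (n * label (x2 + h)) mod (2 * n)"
    unfolding gsub_lift_off[OF assms(1,3)] gsub_lift_on prod.inject .
  then have first: "x1 = (x2 + k) mod m"
    and second: "(\<rho> y1 - y1 + n * label x1) mod (2 * n) = (n * label (x2 + h)) mod (2 * n)"
    by blast+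
  define e where "e = (\<rho> y1 - y1) mod (2 * n)"
  have "(e + n * label x1) mod (2 * n) = (n * label (x2 + h)) mod (2 * n)"
    using second by (simp add: e_def mod_add_left_eq)
  moreover have "e \<in> {0..<2 * n}" "e \<noteq> n" using n_pos diff_ne assms(2) by (simp_all add: e_def)
  ultimately have e: "e = 0" and labels: "label x1 = label (x2 + h)"
    using add_half_mod_eq_cases[OF n_pos] label_01 by blast+
  have "(\<rho> y1 - y1) mod (2 * n) = (\<rho> 0 - 0) mod (2 * n)" using e fixes_a by (simp add: e_def)
  moreover have "y1 \<in> {0..<2 * n} - {s}" "0 \<in> {0..<2 * n} - {s}"
    using assms(2,3) a_ne_b n_pos by auto
  ultimately have "y1 = 0" by (rule inj_onD[OF diff_inj])
  then have "x1 mod m \<noteq> 0" using assms(1,4) by simp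
  moreover have "(x1 - h) mod m = (x2 + h) mod m"
  proof -
    have "(x1 - h) mod m = (x2 + k - h) mod m" using first by (simp add: mod_diff_left_eq)
    also have "\<dots> = (x2 + h) mod m" using k_cong_double_h[of "x2 - h"] by (simp add: algebra_simps)
    finally show ?thesis .
  qed
  ultimately show False using label_shift label_cong labels by metis
qed

lemma lift_diff_inj: "inj_on (\<lambda>p. gsub m n (lift p) p) (grp m n - {(0, 0)})"
proof (rule inj_onI)
  fix p1 p2 assume p: "p1 \<in> grp m n - {(0, 0)}" "p2 \<in> grp m n - {(0, 0)}"
    and eq: "gsub m n (lift p1) p1 = gsub m n (lift p2) p2"
  obtain x1 y1 x2 y2 where p12: "p1 = (x1, y1)" "p2 = (x2, y2)" by fastforce
  have r: "x1 \<in> {0..<m}" "y1 \<in> {0..<2 * n}" "x2 \<in> {0..<m}" "y2 \<in> {0..<2 * n}"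
    "(x1, y1) \<noteq> (0, 0)" "(x2, y2) \<noteq> (0, 0)"
    using p p12 by (auto simp: grp_def)
  consider "y1 = s" "y2 = s" | "y1 \<noteq> s" "y2 \<noteq> s" | "(y1 = s) \<noteq> (y2 = s)" by blast
  then show "p1 = p2"
  proof cases
    case 1
    then have "(x1 + k) mod m = (x2 + k) mod m" using eq p12 by (simp add: gsub_lift_on)
    then have "x1 mod m = x2 mod m" by (rule mod_add_right_cancel)
    then show ?thesis using 1 p12 r by simp
  next
    case 2
    have "x1 = x2 \<and>
        (\<rho> y1 - y1 + n * label x1) mod (2 * n) = (\<rho> y2 - y2 + n * label x2) mod (2 * n)"
      using eq unfolding p12 gsub_lift_off[OF r(1) 2(1)] gsub_lift_off[OF r(3) 2(2)] prod.inject .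
    then have x12: "x1 = x2"
      and "(\<rho> y1 - y1 + n * label x2) mod (2 * n) = (\<rho> y2 - y2 + n * label x2) mod (2 * n)"
      by auto
    then have "(\<rho> y1 - y1) mod (2 * n) = (\<rho> y2 - y2) mod (2 * n)"
      using mod_add_right_cancel by blast
    then have "y1 = y2" by (rule inj_onD[OF diff_inj]) (use r 2 in auto)
    then show ?thesis using x12 p12 by simp
  next
    case 3
    then show ?thesis using lift_diff_rows_disjoint r eq p12 by metis
  qed
qed

lemma lift_diff_ne_involution:
  assumes "p \<in> grp m n"
  shows "gsub m n (lift p) p \<noteq> (0, n)"
proof
  assume diff: "gsub m n (lift p) p = (0, n)"
  obtain x y where p: "p = (x, y)" "x \<in> {0..<m}" "y \<in> {0..<2 * n}"
    using assms by (auto simp: grp_def)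
  show False
  proof (cases "y = s")
    case True
    then have "(x + k) mod m = 0" and label: "(n * label (x + h)) mod (2 * n) = n"
      using diff p by (simp_all add: gsub_lift_on)
    then have "(x + 2 * h) mod m = 0" using k_cong_double_h[of x] by simp
    then have "m dvd (x + h) - (- h)" by (simp add: mod_eq_0_iff_dvd algebra_simps)
    then have "(x + h) mod m = (- h) mod m" by (simp only: mod_eq_dvd_iff)
    then have "label (x + h) = 0" using label_cong label_minus_h by metis
    then show False using label n_pos by simp
  next
    case False
    have "x = 0 \<and> (\<rho> y - y + n * label x) mod (2 * n) = n"
      using diff unfolding p(1) gsub_lift_off[OF p(2) False] prod.inject .
    then have "(\<rho> y - y + n * label 0) mod (2 * n) = n" by blast
    then have "(\<rho> y - y) mod (2 * n) = n" by (simp add: label_def)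
    then show False using diff_ne p by blast
  qed
qed

lemma lift_fixes_origin: "lift (0, 0) = (0, 0)"
  using a_ne_b fixes_a by (simp add: lift_off label_def)

lemma lift_fixes: "lift ((- k) mod m, s) = ((- k) mod m, s)"
proof -
  have "(2 * ((- k) mod m) + k) mod m = (2 * (- k) + k) mod m"
    by (metis mod_add_left_eq mod_mult_right_eq)
  then have "(2 * ((- k) mod m) + k) mod m = (- k) mod m" by simp
  moreover have "label ((- k) mod m + h) = 0"
  proof -
    have "((- k) mod m + h) mod m = (- k + h) mod m" by (simp add: mod_add_left_eq)
    also have "\<dots> = (- h) mod m" using k_cong_double_h[of "- k - h"] by simp
    finally show ?thesis using label_cong label_minus_h by metis
  qed
  ultimately show ?thesis using b_in by (simp add: lift_on)
qed

lemma is_delta_perm_lift: "is_delta_perm m n (add_mset (0, 0) (mset_set (grp m n - {(0, n)}))) lift"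
  using m_pos n_pos lift_in_grp inj_lift lift_fixes_origin lift_diff_inj lift_diff_ne_involution
  by (intro is_delta_permI) auto

end

theorem mainTheorem2:
  fixes m n :: int
  assumes "m > 0" and "n > 0" and "odd m"
  shows "\<exists>\<psi>. is_delta_perm m n
              (add_mset (0, 0) (mset_set (grp m n - {(0, n)}))) \<psi>
            \<and> \<psi> (0, 0) = (0, 0)
            \<and> \<psi> ((- ((m - 1) div 2)) mod m, ((n + 1) div 2 + ((m - 1) div 2) * n) mod (2 * n))
               = ((- ((m - 1) div 2)) mod m, ((n + 1) div 2 + ((m - 1) div 2) * n) mod (2 * n))"
proof -
  define k where "k = (m - 1) div 2"
  have m: "m = 2 * k + 1" "k \<ge> 0" using assms by (auto simp: k_def elim!: oddE)
  show ?thesis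
  proof (cases "n = 1")
    case True
    \<comment> \<open>For odd k the second fixed point lies in the row y = 0, which cannot serve as the
      special row s of the lift.\<close>
    have "cyclic_delta_perm m 0 (k + 1) (reflect_perm m (k + 1))"
      using m by (intro cyclic_delta_perm_reflect) auto
    from is_delta_perm_from_cyclic[OF assms(3) this]
    have "\<exists>\<psi>. is_delta_perm m 1 (add_mset (0, 0) (mset_set (grp m 1 - {(0, 1)}))) \<psi>
        \<and> \<psi> (0, 0) = (0, 0) \<and> \<psi> (to_prod m (k + 1)) = to_prod m (k + 1)"
      by blast
    moreover have "to_prod m (k + 1) = ((- k) mod m, ((n + 1) div 2 + k * n) mod (2 * n))"
      using m True by (simp add: to_prod_def mod_eq_dvd_iff)
    ultimately show ?thesis using True unfolding k_def by simp
  next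
    case False
    then obtain \<rho> where cyc: "cyclic_delta_perm n 0 (((n + 1) div 2 + k * n) mod (2 * n)) \<rho>"
      using cyclic_delta_perm_exists assms(2) by fastforce
    interpret delta_lift n "((n + 1) div 2 + k * n) mod (2 * n)" \<rho> m k
      using cyc m by (simp add: delta_lift_def delta_lift_axioms_def)
    show ?thesis
      using is_delta_perm_lift lift_fixes_origin lift_fixes unfolding k_def by blast
  qed
qed

end
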